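(* Let $p$ be an odd prime and $r\in\{1,2,\ldots,(p-1)/2\}$. Then $$\sum_{k=0}^{\frac{p-1}2}\frac{\binom{2k}k^2}{32^k}k(k-1)\cdots(k-r+1)\equiv\begin{cases}0\pmod{p^2}&\text{if }4\mid(p+1-2r),\\ (-1)^{\frac{p-1+2r}4}2^{-\frac{p-1}2}\dfrac{(\frac{p-1}2+r)!}{(\frac{p-1-2r}4)!\,(\frac{p-1+2r}4)!}\pmod{p^2}&\text{if }4\mid(p-1-2r).\end{cases}$$
   Context: Congruences are between rational numbers whose denominators are prime to $p$. *)

theory Defs
  imports "HOL-Number_Theory.Number_Theory"
begin

text \<open>Congruence of rational numbers modulo an integer m, with respect to a prime p:
  x and y are congruent mod m if x - y = a / b with integers a, b, where b is prime to p
  and m divides a.  (Rationals whose denominators are prime to p.)\<close>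
definition qcong :: "int \<Rightarrow> rat \<Rightarrow> rat \<Rightarrow> int \<Rightarrow> bool" where
  "qcong p x y m \<longleftrightarrow> (\<exists>a b :: int. \<not> p dvd b \<and> m dvd a \<and> x - y = of_int a / of_int b)"

end

theory Submission
  imports Defs
begin

text \<open>
  Put p = 2n + 1. For k \<le> n,
    4^k (k!)^2 C(n,k) C(n+k,k) = \<Prod>j=1..k. (p^2 - (2j-1)^2) \<equiv> (-1)^k \<Prod>j=1..k. (2j-1)^2  (mod p^2),
  and 2^k k! \<Prod>j=1..k. (2j-1) = (2k)!, so C(2k,k)^2 / 32^k \<equiv> C(n,k) C(n+k,k) (-1/2)^k (mod p^2).
  Hence the sum is congruent to \<Sum>k. C(n,k) C(n+k,k) (-1/2)^k k(k-1)...(k-r+1) = (-1)^r P_n^(r)(0),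
  where P_n(x) = \<Sum>k. C(n,k) C(n+k,k) ((x-1)/2)^k is the Legendre polynomial.
  Differentiating Legendre's equation (1-x^2) y'' - 2x y' + n(n+1) y = 0 m times at x = 0 gives
  P_n^(m+2)(0) = -(n-m)(n+m+1) P_n^(m)(0); since P_n^(n+1) = 0 and P_n^(n) is known, this
  determines P_n^(m)(0) in closed form, and it vanishes when n - m is odd.
\<close>

lemma qcong_add:
  assumes "prime p" "qcong p x y m" "qcong p x' y' m"
  shows "qcong p (x + x') (y + y') m"
proof -
  obtain a b where ab: "\<not> p dvd b" "m dvd a" "x - y = of_int a / of_int b"
    using assms(2) by (auto simp: qcong_def)
  obtain a' b' where ab': "\<not> p dvd b'" "m dvd a'" "x' - y' = of_int a' / of_int b'"
    using assms(3) by (auto simp: qcong_def)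
  have "b \<noteq> 0" "b' \<noteq> 0"
    using ab(1) ab'(1) by auto
  have "x + x' - (y + y') = of_int a / of_int b + of_int a' / of_int b'"
    by (simp flip: ab(3) ab'(3))
  also have "\<dots> = of_int (a * b' + a' * b) / of_int (b * b')"
    using \<open>b \<noteq> 0\<close> \<open>b' \<noteq> 0\<close> by (simp add: field_simps)
  finally have "x + x' - (y + y') = of_int (a * b' + a' * b) / of_int (b * b')" .
  moreover have "\<not> p dvd b * b'"
    using assms(1) ab(1) ab'(1) by (simp add: prime_dvd_mult_iff)
  moreover have "m dvd a * b' + a' * b"
    using ab(2) ab'(2) by simp
  ultimately show ?thesis
    unfolding qcong_def by blast
qed

lemma qcong_sum:
  assumes "prime p" "\<And>k. k \<in> A \<Longrightarrow> qcong p (f k) (g k) m"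
  shows "qcong p (\<Sum>k\<in>A. f k) (\<Sum>k\<in>A. g k) m"
proof -
  have "qcong p 0 0 m"
    unfolding qcong_def using assms(1) by (intro exI[of _ 0] exI[of _ 1]) auto
  then show ?thesis
    using assms by (induction A rule: infinite_finite_induct) (auto intro: qcong_add)
qed

definition falling_fact :: "nat \<Rightarrow> nat \<Rightarrow> 'a::comm_ring_1" where
  "falling_fact k m = (\<Prod>j<m. of_int (int k - int j))"

lemma falling_fact_Suc: "falling_fact k (Suc m) = falling_fact k m * (of_nat k - of_nat m)"
  by (simp add: falling_fact_def)

lemma of_int_falling_fact: "of_int (falling_fact k m) = falling_fact k m"
  by (simp add: falling_fact_def)

lemma falling_fact_Suc_left:
  "(of_nat k + 1) * falling_fact k m = (of_nat k + 1 - of_nat m) * falling_fact (Suc k) m"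
proof (induction m)
  case 0
  then show ?case by (simp add: falling_fact_def)
next
  case (Suc m)
  have "(of_nat k + 1) * falling_fact k (Suc m) = ((of_nat k + 1) * falling_fact k m :: 'a) * (of_nat k - of_nat m)"
    by (simp add: falling_fact_Suc mult.assoc)
  also have "\<dots> = (of_nat k + 1 - of_nat m) * falling_fact (Suc k) m * (of_nat k - of_nat m)"
    using Suc.IH by simp
  also have "\<dots> = (of_nat k + 1 - of_nat (Suc m)) * falling_fact (Suc k) (Suc m)"
    by (simp add: falling_fact_Suc algebra_simps)
  finally show ?case .
qed

lemma falling_fact_eq_0: "k < m \<Longrightarrow> falling_fact k m = 0"
  unfolding falling_fact_def by (rule prod_zero) (auto intro!: bexI[of _ k])

lemma falling_fact_self: "falling_fact k k = fact k"
proof (induction k)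
  case 0
  then show ?case by (simp add: falling_fact_def)
next
  case (Suc k)
  have "falling_fact (Suc k) k = (of_nat k + 1) * (falling_fact k k :: 'a)"
    using falling_fact_Suc_left[of k k, symmetric] by simp
  then show ?case by (simp add: Suc.IH falling_fact_Suc fact_Suc add.commute)
qed

lemma Suc_times_binomial_Suc: "Suc k * (n choose Suc k) = (n - k) * (n choose k)"
  by (metis binomial_absorption binomial_absorb_comp)

definition legendre_coeff :: "nat \<Rightarrow> nat \<Rightarrow> rat" where
  "legendre_coeff n k = of_nat (n choose k) * of_nat ((n + k) choose k) * (-1/2) ^ k"

lemma legendre_coeff_Suc:
  "legendre_coeff n (Suc k) * (of_nat k + 1)^2
     = -(1/2) * (of_nat n - of_nat k) * (of_nat n + of_nat k + 1) * legendre_coeff n k"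
proof (cases "k \<le> n")
  case True
  have "of_nat (Suc k * (n choose Suc k)) = (of_nat ((n - k) * (n choose k)) :: rat)"
    by (simp only: Suc_times_binomial_Suc)
  then have lower: "(of_nat k + 1) * (of_nat (n choose Suc k) :: rat) = (of_nat n - of_nat k) * of_nat (n choose k)"
    using True by (simp add: of_nat_diff algebra_simps del: binomial_Suc_Suc)
  have "of_nat (Suc k * (Suc (n + k) choose Suc k)) = (of_nat (Suc (n + k) * ((n + k) choose k)) :: rat)"
    by (simp only: Suc_times_binomial)
  then have upper: "(of_nat k + 1) * (of_nat (Suc (n + k) choose Suc k) :: rat)
      = (of_nat n + of_nat k + 1) * of_nat ((n + k) choose k)"
    by (simp add: algebra_simps del: binomial_Suc_Suc)
  have "legendre_coeff n (Suc k) * (of_nat k + 1)^2 =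
     ((of_nat k + 1) * of_nat (n choose Suc k)) * ((of_nat k + 1) * of_nat (Suc (n + k) choose Suc k)) * (-1/2)^Suc k"
    by (simp add: legendre_coeff_def power2_eq_square mult_ac del: binomial_Suc_Suc)
  also have "\<dots> = -(1/2) * (of_nat n - of_nat k) * (of_nat n + of_nat k + 1) * legendre_coeff n k"
    unfolding lower upper by (simp add: legendre_coeff_def mult_ac)
  finally show ?thesis .
next
  case False
  then show ?thesis by (simp add: legendre_coeff_def binomial_eq_0 del: binomial_Suc_Suc)
qed

definition legendre_falling_sum :: "nat \<Rightarrow> nat \<Rightarrow> rat" where
  "legendre_falling_sum n m = (\<Sum>k=0..n. legendre_coeff n k * falling_fact k m)"

lemma legendre_falling_sum_Suc_Suc:
  "legendre_falling_sum n (Suc (Suc m))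
     = -((of_nat n - of_nat m) * (of_nat n + of_nat m + 1)) * legendre_falling_sum n m"
proof -
  define c where "c = (of_nat n - of_nat m) * (of_nat n + of_nat m + 1 :: rat)"
  \<comment> \<open>\<open>g\<close> is a telescoping certificate in the sense of Zeilberger's algorithm.\<close>
  define g where "g k = legendre_coeff n k * of_nat k * (of_nat k - of_nat m) * falling_fact k m" for k
  have g_Suc: "g (Suc k) = -(1/2) * (of_nat n - of_nat k) * (of_nat n + of_nat k + 1)
      * legendre_coeff n k * falling_fact k m" for k
  proof -
    have "g (Suc k) = legendre_coeff n (Suc k) * (of_nat k + 1) * ((of_nat k + 1 - of_nat m) * falling_fact (Suc k) m)"
      by (simp add: g_def algebra_simps)
    also have "\<dots> = (legendre_coeff n (Suc k) * (of_nat k + 1)^2) * falling_fact k m"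
      by (simp only: falling_fact_Suc_left[symmetric]) (simp add: power2_eq_square mult_ac)
    finally show ?thesis by (simp only: legendre_coeff_Suc)
  qed
  have telescope: "legendre_coeff n k * falling_fact k (Suc (Suc m)) + c * (legendre_coeff n k * falling_fact k m)
      = 2 * (g k - g (Suc k))" for k
    unfolding g_Suc by (simp add: c_def g_def falling_fact_Suc field_simps; simp add: algebra_simps)
  have "legendre_falling_sum n (Suc (Suc m)) + c * legendre_falling_sum n m
      = (\<Sum>k<Suc n. 2 * (g k - g (Suc k)))"
    unfolding legendre_falling_sum_def sum_distrib_left sum.distrib[symmetric] telescope
    by (simp only: atLeast0AtMost lessThan_Suc_atMost)
  also have "\<dots> = 2 * (g 0 - g (Suc n))"
    by (simp only: sum_distrib_left[symmetric] sum_lessThan_telescope')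
  also have "\<dots> = 0"
    by (simp add: g_def legendre_coeff_def binomial_eq_0 del: binomial_Suc_Suc)
  finally show ?thesis by (simp add: c_def eq_neg_iff_add_eq_0)
qed

lemma legendre_falling_sum_Suc_self: "legendre_falling_sum n (Suc n) = 0"
  unfolding legendre_falling_sum_def by (rule sum.neutral) (auto simp: falling_fact_eq_0)

lemma legendre_falling_sum_self:
  "legendre_falling_sum n n = of_nat ((2 * n) choose n) * (-1/2) ^ n * fact n"
proof -
  have "legendre_falling_sum n n = legendre_coeff n n * falling_fact n n"
    unfolding legendre_falling_sum_def
    by (subst sum.mono_neutral_left[of "{0..n}" "{n}", symmetric]) (auto simp: falling_fact_eq_0)
  then show ?thesis by (simp add: legendre_coeff_def falling_fact_self mult_2)
qed

definition legendre_falling_closed :: "nat \<Rightarrow> nat \<Rightarrow> rat" where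
  "legendre_falling_closed n m = (-1) ^ ((n + m) div 2) / 2 ^ n * of_nat (fact (n + m))
     / (of_nat (fact ((n - m) div 2)) * of_nat (fact ((n + m) div 2)))"

lemma legendre_falling_closed_self: "legendre_falling_closed n n = legendre_falling_sum n n"
proof -
  have central: "fact n * fact n * of_nat ((2 * n) choose n) = (fact (2 * n) :: rat)"
    using binomial_fact_lemma[of n "2 * n", THEN arg_cong, of "of_nat :: nat \<Rightarrow> rat"]
    by (simp add: mult_2)
  have "(-1/2 :: rat) ^ n = (-1) ^ n / 2 ^ n"
    by (simp add: power_divide[symmetric])
  then have "legendre_falling_sum n n = (-1) ^ n / 2 ^ n * (fact n * fact n * of_nat ((2 * n) choose n)) / fact n"
    by (simp add: legendre_falling_sum_self mult_ac)
  also have "\<dots> = (-1) ^ n / 2 ^ n * fact (2 * n) / fact n"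
    by (simp only: central)
  also have "\<dots> = legendre_falling_closed n n"
    by (simp add: legendre_falling_closed_def mult_2)
  finally show ?thesis ..
qed

lemma legendre_falling_closed_Suc_Suc:
  assumes "n = m + 2 * t + 2"
  shows "legendre_falling_closed n (Suc (Suc m))
     = -((of_nat n - of_nat m) * (of_nat n + of_nat m + 1)) * legendre_falling_closed n m"
proof -
  define a where "a = m + t + 1"
  define u :: rat where "u = of_nat a + 1"
  define v :: rat where "v = of_nat t + 1"
  have "(n + Suc (Suc m)) div 2 = Suc a" "(n - Suc (Suc m)) div 2 = t" "n + Suc (Suc m) = Suc (Suc (2 * a))"
    "(n + m) div 2 = a" "(n - m) div 2 = Suc t" "n + m = 2 * a"
    using assms by (simp_all add: a_def)
  then have lhs: "legendre_falling_closed n (Suc (Suc m))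
      = (-1) ^ Suc a / 2 ^ n * fact (Suc (Suc (2 * a))) / (fact t * fact (Suc a))"
    and rhs: "legendre_falling_closed n m = (-1) ^ a / 2 ^ n * fact (2 * a) / (fact (Suc t) * fact a)"
    by (simp_all only: legendre_falling_closed_def of_nat_fact)
  have "(of_nat n - of_nat m :: rat) = 2 * v" "(of_nat n + of_nat m + 1 :: rat) = 2 * of_nat a + 1"
    using assms by (simp_all add: a_def v_def)
  moreover have "fact (Suc (Suc (2 * a))) = 2 * u * (2 * of_nat a + 1) * (fact (2 * a) :: rat)"
    "fact (Suc a) = u * (fact a :: rat)" "fact (Suc t) = v * (fact t :: rat)"
    unfolding u_def v_def by (simp_all add: fact_Suc algebra_simps)
  moreover have "u \<noteq> 0" "v \<noteq> 0"
    unfolding u_def v_def by (simp_all add: add_nonneg_eq_0_iff)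
  ultimately show ?thesis
    unfolding lhs rhs by (simp add: field_simps)
qed

lemma legendre_falling_sum_eq:
  assumes "m \<le> n"
  shows "legendre_falling_sum n m = (if even (n - m) then legendre_falling_closed n m else 0)"
proof -
  \<comment> \<open>Phrased with \<open>n + 1 - k\<close> so that it also holds at \<open>k = n + 1\<close>, where \<open>n - k\<close> truncates to 0.\<close>
  define holds where "holds k \<longleftrightarrow> legendre_falling_sum n k
      = (if odd (n + 1 - k) then legendre_falling_closed n k else 0)" for k
  have "holds m \<and> holds (Suc m)"
    using assms
  proof (induction rule: inc_induct)
    case base
    show ?case
      by (simp add: holds_def legendre_falling_closed_self legendre_falling_sum_Suc_self)
  next
    case (step k)
    define c where "c = (of_nat n - of_nat k) * (of_nat n + of_nat k + 1 :: rat)"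
    have "c \<noteq> 0"
      using step.hyps(2) by (simp add: c_def)
    have sum_rec: "legendre_falling_sum n (Suc (Suc k)) = - c * legendre_falling_sum n k"
      unfolding c_def by (rule legendre_falling_sum_Suc_Suc)
    have "holds k"
    proof (cases "odd (n + 1 - k)")
      case True
      then have "\<exists>t. n = k + 2 * t + 2"
        using step.hyps(2) by presburger
      then obtain t where "n = k + 2 * t + 2" ..
      then have "legendre_falling_closed n (Suc (Suc k)) = - c * legendre_falling_closed n k"
        unfolding c_def by (rule legendre_falling_closed_Suc_Suc)
      then show ?thesis
        using step.IH step.hyps(2) True sum_rec \<open>c \<noteq> 0\<close> by (simp add: holds_def)
    next
      case False
      then show ?thesis
        using step.IH step.hyps(2) sum_rec \<open>c \<noteq> 0\<close> by (simp add: holds_def)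
    qed
    then show ?case
      using step.IH by simp
  qed
  then show ?thesis
    using assms by (simp add: holds_def Suc_diff_le)
qed

lemma fact_double_eq_prod_odd:
  "2 ^ k * fact k * (\<Prod>j=1..k. 2 * of_nat j - 1) = (fact (2 * k) :: 'a::{comm_ring_1,ring_char_0})"
proof (induction k)
  case 0
  then show ?case by simp
next
  case (Suc k)
  have "2 ^ Suc k * fact (Suc k) * (\<Prod>j=1..Suc k. 2 * of_nat j - 1)
      = (2 * of_nat k + 2) * (2 * of_nat k + 1) * (2 ^ k * fact k * (\<Prod>j=1..k. 2 * of_nat j - 1) :: 'a)"
    by (simp add: prod.cl_ivl_Suc fact_Suc algebra_simps)
  also have "\<dots> = fact (Suc (Suc (2 * k)))"
    by (simp only: Suc.IH) (simp add: fact_Suc algebra_simps)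
  also have "Suc (Suc (2 * k)) = 2 * Suc k"
    by simp
  finally show ?case .
qed

lemma fact_sq_binomial_binomial_eq_prod:
  assumes "k \<le> n"
  shows "4 ^ k * fact k ^ 2 * int (n choose k) * int ((n + k) choose k)
     = (\<Prod>j=1..k. int (2 * n + 1) ^ 2 - (2 * int j - 1) ^ 2)"
  using assms
proof (induction k)
  case 0
  then show ?case by simp
next
  case (Suc k)
  have "int (Suc k * (n choose Suc k)) = int ((n - k) * (n choose k))"
    by (simp only: Suc_times_binomial_Suc)
  then have lower: "int (Suc k) * int (n choose Suc k) = (int n - int k) * int (n choose k)"
    using Suc.prems by (simp add: of_nat_diff algebra_simps del: binomial_Suc_Suc)
  have "int (Suc k * (Suc (n + k) choose Suc k)) = int (Suc (n + k) * ((n + k) choose k))"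
    by (simp only: Suc_times_binomial)
  then have upper: "int (Suc k) * int (Suc (n + k) choose Suc k) = int (Suc (n + k)) * int ((n + k) choose k)"
    by (simp only: of_nat_mult)
  have "4 ^ Suc k * fact (Suc k) ^ 2 * int (n choose Suc k) * int ((n + Suc k) choose Suc k)
      = 4 * (4 ^ k * fact k ^ 2) * (int (Suc k) * int (n choose Suc k))
          * (int (Suc k) * int (Suc (n + k) choose Suc k))"
    by (simp add: fact_Suc power2_eq_square mult_ac del: binomial_Suc_Suc)
  also have "\<dots> = (4 ^ k * fact k ^ 2 * int (n choose k) * int ((n + k) choose k))
      * (int (2 * n + 1) ^ 2 - (2 * int (Suc k) - 1) ^ 2)"
    unfolding lower upper by (simp add: power2_eq_square algebra_simps)
  also have "\<dots> = (\<Prod>j=1..Suc k. int (2 * n + 1) ^ 2 - (2 * int j - 1) ^ 2)"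
    using Suc by (simp add: prod.cl_ivl_Suc)
  finally show ?case .
qed

lemma central_binomial_sq_cong:
  assumes prime: "prime (2 * n + 1)" and "k \<le> n"
  shows "[int ((2 * k) choose k) ^ 2 = (-16) ^ k * (int (n choose k) * int ((n + k) choose k))]
           (mod int (2 * n + 1) ^ 2)"
proof -
  define P where "P = int (2 * n + 1) ^ 2"
  define A where "A = int ((2 * k) choose k)"
  define B where "B = int (n choose k) * int ((n + k) choose k)"
  define F where "F = (fact k :: int)"
  define Q where "Q = (\<Prod>j=1..k. 2 * int j - 1)"
  have "4 ^ k * F ^ 2 * B = (\<Prod>j=1..k. P - (2 * int j - 1) ^ 2)"
    using fact_sq_binomial_binomial_eq_prod[OF \<open>k \<le> n\<close>] by (simp add: F_def B_def P_def mult_ac)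
  also have "[\<dots> = (\<Prod>j=1..k. - ((2 * int j - 1) ^ 2))] (mod P)"
    by (rule cong_prod) (simp add: cong_iff_dvd_diff)
  also have "(\<Prod>j=1..k. - ((2 * int j - 1) ^ 2)) = (-1) ^ k * Q ^ 2"
    by (simp add: prod_uminus Q_def prod_power_distrib)
  finally have "[(-1) ^ k * 4 ^ k * (4 ^ k * F ^ 2 * B) = (-1) ^ k * 4 ^ k * ((-1) ^ k * Q ^ 2)] (mod P)"
    by (rule cong_scalar_left)
  moreover have "(-1) ^ k * 4 ^ k * (4 ^ k * F ^ 2 * B) = (-16) ^ k * B * F ^ 2"
    by (simp add: power_mult_distrib[symmetric])
  moreover have "(-1) ^ k * 4 ^ k * ((-1) ^ k * Q ^ 2) = A ^ 2 * F ^ 2"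
  proof -
    have "A * F * F = fact (2 * k)"
      using binomial_fact_lemma[of k "2 * k", THEN arg_cong, of int]
      by (simp add: A_def F_def of_nat_fact mult_2 mult_ac)
    also have "\<dots> = 2 ^ k * Q * F"
      using fact_double_eq_prod_odd[of k, where 'a = int] by (simp add: Q_def F_def mult_ac)
    finally have "2 ^ k * Q = A * F"
      by (simp add: F_def)
    have "(-1) ^ k * (-1) ^ k = (1 :: int)" "(4 :: int) ^ k = (2 ^ k) ^ 2"
      by (simp_all add: power2_eq_square flip: power_mult_distrib)
    then have "(-1) ^ k * 4 ^ k * ((-1) ^ k * Q ^ 2) = (2 ^ k * Q) ^ 2"
      by (simp only: power_mult_distrib mult_ac) (metis mult.assoc mult_1_left)
    also have "\<dots> = A ^ 2 * F ^ 2"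
      by (simp only: \<open>2 ^ k * Q = A * F\<close> power_mult_distrib)
    finally show ?thesis .
  qed
  moreover have "coprime (F ^ 2) P"
  proof -
    have "\<not> 2 * n + 1 dvd fact k"
      using prime \<open>k \<le> n\<close> by (simp add: prime_dvd_fact_iff)
    then have "\<not> int (2 * n + 1) dvd F"
      by (metis F_def int_dvd_int_iff of_nat_fact)
    then have "coprime (int (2 * n + 1)) F"
      using prime by (simp add: prime_imp_coprime prime_nat_int_transfer del: of_nat_Suc)
    then show ?thesis
      by (simp add: P_def coprime_commute del: of_nat_Suc)
  qed
  ultimately have "[(-16) ^ k * B = A ^ 2] (mod P)"
    by (simp add: cong_mult_rcancel)
  then show ?thesis
    by (simp add: A_def B_def P_def cong_sym_eq)
qed

lemma central_binomial_sq_qcong_legendre_coeff: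
  assumes prime: "prime (2 * n + 1)" and "k \<le> n"
  shows "qcong (int (2 * n + 1)) (of_nat ((2 * k) choose k) ^ 2 / 32 ^ k * falling_fact k r)
           (legendre_coeff n k * falling_fact k r) (int (2 * n + 1) ^ 2)"
proof -
  define a where "a = (int ((2 * k) choose k) ^ 2 - (-16) ^ k * (int (n choose k) * int ((n + k) choose k)))
                      * falling_fact k r"
  have "int (2 * n + 1) ^ 2 dvd a"
    using central_binomial_sq_cong[OF assms] by (simp add: a_def cong_iff_dvd_diff)
  moreover have "\<not> int (2 * n + 1) dvd 32 ^ k"
  proof
    assume "int (2 * n + 1) dvd 32 ^ k"
    then have "2 * n + 1 dvd 2 ^ (5 * k)"
      by (simp add: power_mult flip: int_dvd_int_iff)
    then have "2 * n + 1 dvd 2"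
      using prime prime_dvd_power by blast
    then have "n = 0"
      by (auto dest: dvd_imp_le)
    then show False
      using prime by simp
  qed
  moreover have "(-1/2 :: rat) ^ k = (-16) ^ k / 32 ^ k"
    by (simp flip: power_divide)
  then have "of_nat ((2 * k) choose k) ^ 2 / 32 ^ k * falling_fact k r - legendre_coeff n k * falling_fact k r
      = of_int a / of_int (32 ^ k)"
    by (simp add: a_def legendre_coeff_def of_int_falling_fact field_simps)
  ultimately show ?thesis
    unfolding qcong_def by blast
qed

lemma legendre_falling_sum_qcong:
  assumes "prime (2 * n + 1)"
  shows "qcong (int (2 * n + 1)) (\<Sum>k=0..n. of_nat ((2 * k) choose k) ^ 2 / 32 ^ k * falling_fact k r)
           (legendre_falling_sum n r) (int (2 * n + 1) ^ 2)"
proof -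
  have "prime (int (2 * n + 1))"
    using assms by (simp only: prime_nat_int_transfer)
  then show ?thesis
    unfolding legendre_falling_sum_def
    using assms by (intro qcong_sum central_binomial_sq_qcong_legendre_coeff) auto
qed

theorem theorem2p3:
  fixes p r :: nat
  assumes "prime p" and "odd p" and "1 \<le> r" and "r \<le> (p - 1) div 2"
  defines "S \<equiv> (\<Sum>k = 0..(p - 1) div 2.
             (of_nat ((2 * k) choose k) ^ 2 / 32 ^ k) * (\<Prod>j<r. (of_int (int k - int j) :: rat)))"
  shows "(4 dvd (p + 1 - 2 * r) \<longrightarrow> qcong (int p) S 0 (int p ^ 2)) \<and>
         (4 dvd (p - 1 - 2 * r) \<longrightarrow>
            qcong (int p) S
              ((-1) ^ ((p - 1 + 2 * r) div 4) / 2 ^ ((p - 1) div 2)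
                * of_nat (fact ((p - 1) div 2 + r))
                / (of_nat (fact ((p - 1 - 2 * r) div 4)) * of_nat (fact ((p - 1 + 2 * r) div 4))))
              (int p ^ 2))"
proof -
  define n where "n = (p - 1) div 2"
  have p: "p = 2 * n + 1" and "r \<le> n"
    using assms(2,4) by (simp_all add: n_def)
  have "S = (\<Sum>k=0..n. of_nat ((2 * k) choose k) ^ 2 / 32 ^ k * falling_fact k r)"
    by (simp add: S_def n_def falling_fact_def)
  then have S_qcong: "qcong (int p) S (legendre_falling_sum n r) (int p ^ 2)"
    using legendre_falling_sum_qcong[of n r] assms(1) by (simp only: p)
  have sum_eq: "legendre_falling_sum n r = (if even (n - r) then legendre_falling_closed n r else 0)"
    using \<open>r \<le> n\<close> by (rule legendre_falling_sum_eq)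
  show ?thesis
  proof (intro conjI impI)
    assume "4 dvd (p + 1 - 2 * r)"
    then have "odd (n - r)"
      using p \<open>r \<le> n\<close> by presburger
    then show "qcong (int p) S 0 (int p ^ 2)"
      using S_qcong sum_eq by simp
  next
    assume "4 dvd (p - 1 - 2 * r)"
    then have "even (n - r)"
      using p \<open>r \<le> n\<close> by presburger
    have "(p - 1) div 2 = n" "(p - 1 + 2 * r) div 4 = (n + r) div 2" "(p - 1 - 2 * r) div 4 = (n - r) div 2"
      using p by presburger+
    then show "qcong (int p) S ((-1) ^ ((p - 1 + 2 * r) div 4) / 2 ^ ((p - 1) div 2)
        * of_nat (fact ((p - 1) div 2 + r))
        / (of_nat (fact ((p - 1 - 2 * r) div 4)) * of_nat (fact ((p - 1 + 2 * r) div 4)))) (int p ^ 2)"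
      using S_qcong sum_eq \<open>even (n - r)\<close> by (simp add: legendre_falling_closed_def)
  qed
qed

end
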